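(* Let $\mathcal{N}$ be a Beeping Network with $n$ nodes and maximum degree $\Delta$, where each node has a unique ID from $[1,n^c]$ for a constant $c\ge 1$ and each node knows $n$ and the parameter $c$. Then there is a deterministic distributed algorithm that solves the Learning Neighborhood problem on $\mathcal{N}$ in $O(\Delta^2\log^2 n)$ beeping rounds.
   Context: A Beeping Network is a network of $n$ nodes whose topology is an undirected graph $G=(V,E)$; $N(v)$ denotes the set of neighbors of $v$. Time is divided into synchronous rounds and all nodes start simultaneously. In each round every node either beeps or listens; a listening node hears "silence" if no neighbor beeps and "noise" if at least one neighbor beeps, and cannot distinguish one beep from several. Complexity is measured in rounds. Learning Neighborhood: the problem is solved once every node $v$ knows the ID of every node $u\in N(v)$. *)

theory Defs
  imports Complex_Main
begin

datatype obs = Beeped | Silence | Noise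

text \<open>In each round a node beeps, listens, or has terminated with an output
(the set of IDs it believes to be its neighbours).\<close>
datatype act = Beep | Listen | Halt "nat set"

text \<open>A deterministic distributed algorithm: the action of a node depends only on
the known n, its own ID and its local history of observations.\<close>
type_synonym alg = "nat \<Rightarrow> nat \<Rightarrow> obs list \<Rightarrow> act"

definition simple_graph :: "nat \<Rightarrow> (nat \<Rightarrow> nat \<Rightarrow> bool) \<Rightarrow> bool" where
  "simple_graph n E \<longleftrightarrow> (\<forall>u v. E u v \<longrightarrow> u < n \<and> v < n \<and> u \<noteq> v \<and> E v u)"

definition nbrs :: "nat \<Rightarrow> (nat \<Rightarrow> nat \<Rightarrow> bool) \<Rightarrow> nat \<Rightarrow> nat set" where
  "nbrs n E v = {u. u < n \<and> E v u}"

definition max_degree :: "nat \<Rightarrow> (nat \<Rightarrow> nat \<Rightarrow> bool) \<Rightarrow> nat" where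
  "max_degree n E = Max ((\<lambda>v. card (nbrs n E v)) ` {0..<n})"

text \<open>Local histories after t synchronous rounds (all nodes start simultaneously).
A terminated node neither beeps nor records anything further.\<close>
primrec hists :: "alg \<Rightarrow> nat \<Rightarrow> (nat \<Rightarrow> nat \<Rightarrow> bool) \<Rightarrow> (nat \<Rightarrow> nat) \<Rightarrow> nat \<Rightarrow> nat \<Rightarrow> obs list" where
  "hists A n E ID 0 = (\<lambda>v. [])"
| "hists A n E ID (Suc t) = (\<lambda>v.
     (case A n (ID v) (hists A n E ID t v) of
        Halt S \<Rightarrow> hists A n E ID t v
      | Beep \<Rightarrow> hists A n E ID t v @ [Beeped]
      | Listen \<Rightarrow> hists A n E ID t v @
          [if \<exists>u\<in>nbrs n E v. A n (ID u) (hists A n E ID t u) = Beep then Noise else Silence]))"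

definition solves_within :: "alg \<Rightarrow> nat \<Rightarrow> (nat \<Rightarrow> nat \<Rightarrow> bool) \<Rightarrow> (nat \<Rightarrow> nat) \<Rightarrow> nat \<Rightarrow> bool" where
  "solves_within A n E ID T \<longleftrightarrow>
     (\<forall>v<n. \<exists>t\<le>T. A n (ID v) (hists A n E ID t v) = Halt (ID ` nbrs n E v))"

end

theory Submission
  imports Defs "HOL-Library.FuncSet"
begin

(* Phase j of the algorithm tests the guess "maximum degree at most 2^j". In its code rounds every
   node beeps the codeword of its ID in a (2^j + 1)-disjunct code, which exists with length
   O(4^j log n) by a counting argument, and listens otherwise. A node collects as candidates the IDs
   whose codeword it heard in full. The candidates always include all neighbours, and they are exactly
   the neighbours once the degree is at most 2^j; so a phase with at most 2^j candidates certifies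
   the degree bound, and accepting it is correct. Undecided nodes beep in a status round after every
   phase and a node halts only after a silent status round, so no node stops beeping while a
   neighbour still decodes. Everybody halts after the first phase with 2^j >= Delta, that is after
   O(4^j log n) = O(Delta^2 log n) rounds. *)

section \<open>Disjunct codes\<close>

definition disjunct_code :: "nat \<Rightarrow> nat \<Rightarrow> nat \<Rightarrow> nat \<Rightarrow> (nat \<times> nat \<Rightarrow> nat) \<Rightarrow> bool" where
  "disjunct_code N K t q H \<longleftrightarrow> H \<in> {0..<t} \<times> {0..<N} \<rightarrow>\<^sub>E {0..<q} \<and>
     (\<forall>x<N. \<forall>S\<subseteq>{0..<N}. x \<notin> S \<longrightarrow> card S \<le> K \<longrightarrow> (\<exists>k<t. \<forall>y\<in>S. H (k, y) \<noteq> H (k, x)))"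

lemma card_UN_le_mult:
  assumes "finite I" "\<And>i. i \<in> I \<Longrightarrow> card (F i) \<le> m"
  shows "card (\<Union>i\<in>I. F i) \<le> card I * m"
proof -
  have "card (\<Union>i\<in>I. F i) \<le> (\<Sum>i\<in>I. card (F i))" by (rule card_UN_le[OF assms(1)])
  also have "\<dots> \<le> card I * m" using sum_bounded_above[of I "\<lambda>i. card (F i)" m] assms(2) by simp
  finally show ?thesis .
qed

lemma card_PiE_column_copies_le:
  assumes "finite A" "finite B" "finite Q" "x \<in> B" "\<And>k. k \<in> A \<Longrightarrow> \<sigma> k \<in> B - {x}"
  shows "card {H \<in> A \<times> B \<rightarrow>\<^sub>E Q. \<forall>k\<in>A. H (k, x) = H (k, \<sigma> k)} \<le> card Q ^ (card A * card B - card A)"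
proof -
  let ?F = "{H \<in> A \<times> B \<rightarrow>\<^sub>E Q. \<forall>k\<in>A. H (k, x) = H (k, \<sigma> k)}"
  let ?R = "A \<times> B - A \<times> {x}"
  have "inj_on (\<lambda>H. restrict H ?R) ?F"
  proof (rule inj_onI)
    fix G H assume G: "G \<in> ?F" and H: "H \<in> ?F" and eq: "restrict G ?R = restrict H ?R"
    have on_R: "G p = H p" if "p \<in> ?R" for p using fun_cong[OF eq, of p] that by simp
    have G_PiE: "G \<in> A \<times> B \<rightarrow>\<^sub>E Q" and H_PiE: "H \<in> A \<times> B \<rightarrow>\<^sub>E Q" using G H by simp_all
    show "G = H"
    proof
      fix p show "G p = H p"
      proof (cases "p \<in> A \<times> {x}")
        case True
        then obtain k where p: "p = (k, x)" "k \<in> A" by auto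
        then have "(k, \<sigma> k) \<in> ?R" using assms(5) by auto
        then show ?thesis using G H p on_R by auto
      next
        case outside_column: False
        show ?thesis
        proof (cases "p \<in> A \<times> B")
          case True
          then show ?thesis using outside_column on_R by blast
        next
          case False
          then show ?thesis using PiE_arb[OF G_PiE] PiE_arb[OF H_PiE] by simp
        qed
      qed
    qed
  qed
  moreover have "(\<lambda>H. restrict H ?R) ` ?F \<subseteq> ?R \<rightarrow>\<^sub>E Q" by (auto simp: PiE_iff split: if_splits)
  ultimately have "card ?F \<le> card (?R \<rightarrow>\<^sub>E Q)"
    using assms(1-3) by (intro card_inj_on_le) (auto simp: finite_PiE)
  also have "card ?R = card A * card B - card A"
    using assms by (subst card_Diff_subset) (auto simp: card_cartesian_product)
  then have "card (?R \<rightarrow>\<^sub>E Q) = card Q ^ (card A * card B - card A)"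
    using assms(1,2) by (simp add: card_PiE)
  finally show ?thesis .
qed

lemma exists_PiE_onto:
  assumes "finite S" "S \<noteq> {}" "card S \<le> K"
  shows "\<exists>f \<in> {0..<K} \<rightarrow>\<^sub>E S. f ` {0..<K} = S"
proof -
  obtain g where g: "bij_betw g {0..<card S} S" using ex_bij_betw_nat_finite[OF assms(1)] by blast
  obtain s where s: "s \<in> S" using assms(2) by blast
  define f where "f = restrict (\<lambda>i. if i < card S then g i else s) {0..<K}"
  have into: "f ` {0..<K} \<subseteq> S" using g s by (auto simp: f_def bij_betw_def)
  have "f ` {0..<K} = S"
  proof
    show "f ` {0..<K} \<subseteq> S" by (fact into)
    show "S \<subseteq> f ` {0..<K}"
    proof
      fix y assume "y \<in> S"
      then obtain i where "i < card S" "g i = y" using g by (metis atLeastLessThan_iff bij_betw_def imageE)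
      then show "y \<in> f ` {0..<K}" using assms(3) by (force simp: f_def)
    qed
  qed
  moreover have "f \<in> {0..<K} \<rightarrow>\<^sub>E S"
    using into by (auto simp: PiE_iff f_def)
  ultimately show ?thesis by blast
qed

text \<open>Non-disjunct codes in countable form: x is the covered word, f enumerates the at most K
  covering words and \<sigma> k is a covering word that agrees with x in coordinate k.\<close>
definition bad_codes :: "nat \<Rightarrow> nat \<Rightarrow> nat \<Rightarrow> nat \<Rightarrow> (nat \<times> nat \<Rightarrow> nat) set" where
  "bad_codes N K t q =
     (\<Union>x\<in>{0..<N}. \<Union>f\<in>{0..<K} \<rightarrow>\<^sub>E {0..<N} - {x}. \<Union>\<sigma>\<in>{0..<t} \<rightarrow>\<^sub>E f ` {0..<K}.
        {H \<in> {0..<t} \<times> {0..<N} \<rightarrow>\<^sub>E {0..<q}. \<forall>k\<in>{0..<t}. H (k, x) = H (k, \<sigma> k)})"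

lemma bad_codes_subset: "bad_codes N K t q \<subseteq> {0..<t} \<times> {0..<N} \<rightarrow>\<^sub>E {0..<q}"
  by (auto simp: bad_codes_def)

lemma card_bad_codes_le: "card (bad_codes N K t q) \<le> N * (N ^ K * (K ^ t * q ^ (t * N - t)))"
  unfolding bad_codes_def
proof (rule card_UN_le_mult[where I = "{0..<N}", simplified])
  fix x assume x: "x < N"
  show "card (\<Union>f\<in>{0..<K} \<rightarrow>\<^sub>E {0..<N} - {x}. \<Union>\<sigma>\<in>{0..<t} \<rightarrow>\<^sub>E f ` {0..<K}.
          {H \<in> {0..<t} \<times> {0..<N} \<rightarrow>\<^sub>E {0..<q}. \<forall>k\<in>{0..<t}. H (k, x) = H (k, \<sigma> k)})
        \<le> N ^ K * (K ^ t * q ^ (t * N - t))"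
  proof (rule order_trans[OF card_UN_le_mult], simp add: finite_PiE)
    fix f assume f: "f \<in> {0..<K} \<rightarrow>\<^sub>E {0..<N} - {x}"
    show "card (\<Union>\<sigma>\<in>{0..<t} \<rightarrow>\<^sub>E f ` {0..<K}.
            {H \<in> {0..<t} \<times> {0..<N} \<rightarrow>\<^sub>E {0..<q}. \<forall>k\<in>{0..<t}. H (k, x) = H (k, \<sigma> k)})
          \<le> K ^ t * q ^ (t * N - t)"
    proof (rule order_trans[OF card_UN_le_mult], simp add: finite_PiE)
      fix \<sigma> assume "\<sigma> \<in> {0..<t} \<rightarrow>\<^sub>E f ` {0..<K}"
      moreover have "f ` {0..<K} \<subseteq> {0..<N} - {x}" using f by (auto dest: PiE_mem)
      ultimately have "\<sigma> k \<in> {0..<N} - {x}" if "k \<in> {0..<t}" for k using that by (meson PiE_mem subsetD)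
      then show "card {H \<in> {0..<t} \<times> {0..<N} \<rightarrow>\<^sub>E {0..<q}. \<forall>k\<in>{0..<t}. H (k, x) = H (k, \<sigma> k)}
          \<le> q ^ (t * N - t)"
        using card_PiE_column_copies_le[of "{0..<t}" "{0..<N}" "{0..<q}" x \<sigma>] x by simp
    next
      have "card (f ` {0..<K}) \<le> K" using card_image_le[of "{0..<K}" f] by simp
      then show "card ({0..<t} \<rightarrow>\<^sub>E f ` {0..<K}) * q ^ (t * N - t) \<le> K ^ t * q ^ (t * N - t)"
        by (simp add: card_PiE power_mono)
    qed
  next
    have "card ({0..<N} - {x}) \<le> N" using card_Diff1_le[of "{0..<N}" x] by simp
    then show "card ({0..<K} \<rightarrow>\<^sub>E {0..<N} - {x}) * (K ^ t * q ^ (t * N - t))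
        \<le> N ^ K * (K ^ t * q ^ (t * N - t))"
      by (simp add: card_PiE power_mono)
  qed
qed

lemma disjunct_code_if_not_bad:
  assumes "0 < t" "H \<in> {0..<t} \<times> {0..<N} \<rightarrow>\<^sub>E {0..<q}" "H \<notin> bad_codes N K t q"
  shows "disjunct_code N K t q H"
  unfolding disjunct_code_def
proof (intro conjI allI impI assms(2))
  fix x S assume x: "x < N" and S: "S \<subseteq> {0..<N}" "x \<notin> S" "card S \<le> K"
  show "\<exists>k<t. \<forall>y\<in>S. H (k, y) \<noteq> H (k, x)"
  proof (rule ccontr)
    assume "\<not> ?thesis"
    then have collide: "\<forall>k<t. \<exists>y\<in>S. H (k, y) = H (k, x)" by auto
    then have "S \<noteq> {}" using assms(1) by blast
    moreover have "finite S" using S(1) finite_subset by blast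
    ultimately obtain f where f: "f \<in> {0..<K} \<rightarrow>\<^sub>E S" "f ` {0..<K} = S"
      using exists_PiE_onto[OF _ _ S(3)] by blast
    define \<sigma> where "\<sigma> = restrict (\<lambda>k. SOME y. y \<in> S \<and> H (k, y) = H (k, x)) {0..<t}"
    have \<sigma>: "\<sigma> k \<in> S \<and> H (k, \<sigma> k) = H (k, x)" if "k < t" for k
      using someI_ex[of "\<lambda>y. y \<in> S \<and> H (k, y) = H (k, x)"] collide that by (auto simp: \<sigma>_def)
    have "x \<in> {0..<N}" using x by simp
    moreover have "f \<in> {0..<K} \<rightarrow>\<^sub>E {0..<N} - {x}" using f(1) S(1,2) by (auto simp: PiE_iff)
    moreover have "\<sigma> \<in> {0..<t} \<rightarrow>\<^sub>E f ` {0..<K}" using \<sigma> f(2) by (auto simp: \<sigma>_def)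
    moreover have "H \<in> {H \<in> {0..<t} \<times> {0..<N} \<rightarrow>\<^sub>E {0..<q}. \<forall>k\<in>{0..<t}. H (k, x) = H (k, \<sigma> k)}"
      using \<sigma> assms(2) by auto
    ultimately have "H \<in> bad_codes N K t q" unfolding bad_codes_def by blast
    then show False using assms(3) by blast
  qed
qed

lemma exists_disjunct_code:
  assumes "1 \<le> K" "N < 2 ^ b"
  shows "\<exists>H. disjunct_code N K ((K + 1) * b) (2 * K) H"
proof -
  define t where "t = (K + 1) * b"
  define q where "q = 2 * K"
  have "N * (N ^ K * (K ^ t * q ^ (t * N - t))) < q ^ (t * N)"
  proof (cases "N = 0")
    case False
    have "N * N ^ K < (2 ^ b) ^ (K + 1)"
      using assms(2) power_strict_mono[of N "2 ^ b" "K + 1"] by simp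
    also have "\<dots> = 2 ^ t" by (metis power_mult mult.commute t_def)
    finally have "N * N ^ K * (K ^ t * q ^ (t * N - t)) < 2 ^ t * (K ^ t * q ^ (t * N - t))"
      using assms(1) by (simp add: q_def)
    also have "\<dots> = q ^ (t + (t * N - t))" by (simp add: q_def power_add power_mult_distrib)
    also have "t + (t * N - t) = t * N" using False by simp
    finally show ?thesis by (simp add: mult.assoc)
  qed simp
  then have "card (bad_codes N K t q) < card ({0..<t} \<times> {0..<N} \<rightarrow>\<^sub>E {0..<q})"
    using card_bad_codes_le[of N K t q] by (simp add: card_PiE card_cartesian_product)
  moreover have "finite (bad_codes N K t q)"
    by (rule finite_subset[OF bad_codes_subset]) (simp add: finite_PiE)
  ultimately have "\<not> {0..<t} \<times> {0..<N} \<rightarrow>\<^sub>E {0..<q} \<subseteq> bad_codes N K t q"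
    by (meson card_mono leD)
  then obtain H where H: "H \<in> {0..<t} \<times> {0..<N} \<rightarrow>\<^sub>E {0..<q}" "H \<notin> bad_codes N K t q"
    by blast
  show ?thesis
  proof (cases "N = 0")
    case True
    then show ?thesis using H(1) by (auto simp: disjunct_code_def t_def q_def)
  next
    case False
    then have "0 < t" using assms(2) by (cases b) (auto simp: t_def)
    then show ?thesis using disjunct_code_if_not_bad H unfolding t_def q_def by blast
  qed
qed

text \<open>Coordinate k of the code becomes a block of q rounds with a single beep, at offset H (k, x).\<close>
definition codeword :: "nat \<Rightarrow> nat \<Rightarrow> (nat \<times> nat \<Rightarrow> nat) \<Rightarrow> nat \<Rightarrow> nat set" where
  "codeword t q H x = {k * q + H (k, x) | k. k < t}"

lemma codeword_less:
  assumes "disjunct_code N K t q H" "x < N" "r \<in> codeword t q H x"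
  shows "r < t * q"
proof -
  obtain k where k: "k < t" "r = k * q + H (k, x)" using assms(3) by (auto simp: codeword_def)
  have "H (k, x) < q" using assms(1,2) k(1) by (auto simp: disjunct_code_def dest!: PiE_mem)
  then have "r < (k + 1) * q" using k(2) by simp
  also have "\<dots> \<le> t * q" using k(1) by (intro mult_right_mono) auto
  finally show ?thesis .
qed

lemma codeword_not_covered:
  assumes H: "disjunct_code N K t q H" and x: "x < N"
    and S: "S \<subseteq> {0..<N}" "x \<notin> S" "card S \<le> K"
  shows "\<not> codeword t q H x \<subseteq> (\<Union>y\<in>S. codeword t q H y)"
proof
  assume covered: "codeword t q H x \<subseteq> (\<Union>y\<in>S. codeword t q H y)"
  have letter_less: "H (k, y) < q" if "k < t" "y < N" for k y
    using H that by (auto simp: disjunct_code_def dest!: PiE_mem)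
  obtain k where k: "k < t" "\<forall>y\<in>S. H (k, y) \<noteq> H (k, x)"
    using H x S unfolding disjunct_code_def by blast
  then have "k * q + H (k, x) \<in> codeword t q H x" by (auto simp: codeword_def)
  then obtain y k' where y: "y \<in> S" "k' < t" "k * q + H (k, x) = k' * q + H (k', y)"
    using covered by (auto simp: codeword_def)
  have "y < N" using y(1) S(1) by auto
  then have "H (k, x) < q" "H (k', y) < q" using letter_less k(1) y(2) x by auto
  then have "k = k'" and "H (k, x) = H (k', y)"
    using y(3) by (metis add.commute div_mult_self3 div_less gr_implies_not0 add_0 mult.commute,
                   metis add.commute mod_mult_self3 mod_less)
  then have "H (k, y) = H (k, x)" by simp
  then show False using k(2) y(1) by blast
qed

section \<open>Phased beeping schedules\<close>

primrec phase_start :: "(nat \<Rightarrow> nat) \<Rightarrow> nat \<Rightarrow> nat" where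
  "phase_start len 0 = 0"
| "phase_start len (Suc j) = phase_start len j + len j + 1"

lemma phase_start_mono: "i \<le> j \<Longrightarrow> phase_start len i \<le> phase_start len j"
  by (induction j) (auto simp: le_Suc_eq)

lemma phase_start_le:
  assumes "\<And>j. len j + 1 \<le> 3 * B * 4 ^ j"
  shows "phase_start len i \<le> B * 4 ^ i"
proof (induction i)
  case (Suc i)
  then show ?case using assms[of i] by simp
qed simp

text \<open>Phase j consists of len j code rounds, in which the node with ID x beeps exactly in the
  rounds cw j x, followed by one status round. The words of phase j must stay uncovered by 2^j + 1
  others: the neighbours of a node of degree at most 2^j together with the node itself.\<close>
locale phased_schedule =
  fixes N :: nat and len :: "nat \<Rightarrow> nat" and cw :: "nat \<Rightarrow> nat \<Rightarrow> nat set"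
  assumes cw_less_len: "x < N \<Longrightarrow> r \<in> cw j x \<Longrightarrow> r < len j"
    and cw_not_covered:
      "x < N \<Longrightarrow> S \<subseteq> {0..<N} \<Longrightarrow> x \<notin> S \<Longrightarrow> card S \<le> 2 ^ j + 1 \<Longrightarrow> \<not> cw j x \<subseteq> (\<Union>y\<in>S. cw j y)"
begin

abbreviation status_round :: "nat \<Rightarrow> nat" where
  "status_round j \<equiv> phase_start len j + len j"

text \<open>A node cannot listen while it beeps, so only the rounds outside its own word are checked.\<close>
definition candidates :: "nat \<Rightarrow> obs list \<Rightarrow> nat \<Rightarrow> nat set" where
  "candidates x h j = {y. y < N \<and> y \<noteq> x \<and> (\<forall>r \<in> cw j y - cw j x. h ! (phase_start len j + r) = Noise)}"

definition decided :: "nat \<Rightarrow> obs list \<Rightarrow> nat \<Rightarrow> bool" where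
  "decided x h i \<longleftrightarrow> (\<exists>j\<le>i. card (candidates x h j) \<le> 2 ^ j)"

definition learned :: "nat \<Rightarrow> obs list \<Rightarrow> nat set" where
  "learned x h = candidates x h (LEAST j. card (candidates x h j) \<le> 2 ^ j)"

definition phase_of :: "nat \<Rightarrow> nat" where
  "phase_of t = (LEAST i. t < phase_start len (Suc i))"

definition halting :: "nat \<Rightarrow> obs list \<Rightarrow> bool" where
  "halting x h \<longleftrightarrow> (\<exists>i. status_round i < length h \<and> decided x h i \<and> h ! status_round i = Silence)"

text \<open>A decided node halts only after a silent status round: undecided nodes beep there, so all
  its neighbours have decided and none of them needs its beeps any more.\<close>
definition learn :: "nat \<Rightarrow> obs list \<Rightarrow> act" where
  "learn x h =
     (if halting x h then Halt (learned x h)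
      else let i = phase_of (length h); r = length h - phase_start len i in
        if r < len i then (if r \<in> cw i x then Beep else Listen)
        else if decided x h i then Listen else Beep)"

lemma status_round_less_phase_start: "i < j \<Longrightarrow> status_round i < phase_start len j"
  using phase_start_mono[of "Suc i" j len] by simp

lemma status_round_less_iff: "status_round i < status_round j \<longleftrightarrow> i < j"
proof
  show "i < j" if "status_round i < status_round j"
    using that status_round_less_phase_start[of j i] by (cases i j rule: linorder_cases) auto
  show "status_round i < status_round j" if "i < j"
    using that status_round_less_phase_start[of i j] by simp
qed

lemma status_round_mono: "i \<le> j \<Longrightarrow> status_round i \<le> status_round j"
  using status_round_less_iff[of j i] by linarith

lemma phase_of_eq: "r \<le> len i \<Longrightarrow> phase_of (phase_start len i + r) = i"
  unfolding phase_of_def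
proof (rule Least_equality)
  show "phase_start len i + r < phase_start len (Suc i)" if "r \<le> len i" using that by simp
  show "i \<le> j" if "phase_start len i + r < phase_start len (Suc j)" for j
    using that phase_start_mono[of "Suc j" i len] by linarith
qed

lemma candidates_append:
  assumes "status_round j \<le> length h"
  shows "candidates x (h @ ys) j = candidates x h j"
proof -
  have "(h @ ys) ! (phase_start len j + r) = h ! (phase_start len j + r)" if "y < N" "r \<in> cw j y" for y r
    using cw_less_len[OF that] assms by (simp add: nth_append)
  then show ?thesis unfolding candidates_def by auto
qed

lemma decided_append:
  assumes "status_round i \<le> length h"
  shows "decided x (h @ ys) i = decided x h i"
proof -
  have "candidates x (h @ ys) j = candidates x h j" if "j \<le> i" for j
    using assms status_round_mono[OF that] by (intro candidates_append) linarith
  then show ?thesis unfolding decided_def by auto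
qed

lemma learn_halting: "halting x h \<Longrightarrow> learn x h = Halt (learned x h)"
  by (simp add: learn_def)

lemma learn_not_halting: "\<not> halting x h \<Longrightarrow> learn x h = Beep \<or> learn x h = Listen"
  by (auto simp: learn_def Let_def)

lemma learn_code_round:
  assumes "\<not> halting x h" "length h = phase_start len i + r" "r < len i"
  shows "learn x h = (if r \<in> cw i x then Beep else Listen)"
  using assms phase_of_eq[of r i] by (simp add: learn_def Let_def)

lemma learn_status_round:
  assumes "\<not> halting x h" "length h = status_round i"
  shows "learn x h = (if decided x h i then Listen else Beep)"
  using assms phase_of_eq[of "len i" i] by (simp add: learn_def Let_def)

end

section \<open>Runs of a phased schedule\<close>

locale phased_run = phased_schedule +
  fixes A :: alg and n :: nat and E :: "nat \<Rightarrow> nat \<Rightarrow> bool" and ID :: "nat \<Rightarrow> nat"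
  assumes A_eq: "A n = learn"
    and graph: "simple_graph n E"
    and ID_inj: "inj_on ID {0..<n}"
    and ID_less: "v < n \<Longrightarrow> ID v < N"
begin

abbreviation hist :: "nat \<Rightarrow> nat \<Rightarrow> obs list" where
  "hist t v \<equiv> hists A n E ID t v"

abbreviation act :: "nat \<Rightarrow> nat \<Rightarrow> act" where
  "act t v \<equiv> learn (ID v) (hist t v)"

definition halted :: "nat \<Rightarrow> nat \<Rightarrow> bool" where
  "halted t v \<longleftrightarrow> (\<exists>S. act t v = Halt S)"

definition heard :: "nat \<Rightarrow> nat \<Rightarrow> obs" where
  "heard t v = (if act t v = Beep then Beeped
     else if \<exists>u\<in>nbrs n E v. act t u = Beep then Noise else Silence)"

lemma hist_Suc: "hist (Suc t) v = (if halted t v then hist t v else hist t v @ [heard t v])"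
  by (cases "act t v") (auto simp: A_eq halted_def heard_def)

declare hists.simps(2) [simp del]

lemma halted_mono:
  assumes "halted t v" "t \<le> t'"
  shows "halted t' v \<and> hist t' v = hist t v"
  using assms(2)
proof (induction t' rule: dec_induct)
  case (step m)
  then have "hist (Suc m) v = hist m v" using hist_Suc[of m v] by simp
  with step show ?case by (auto simp: halted_def)
qed (use assms(1) in simp)

lemma not_halted_before: "\<not> halted t v \<Longrightarrow> t' \<le> t \<Longrightarrow> \<not> halted t' v"
  using halted_mono by blast

lemma length_hist: "(\<forall>t'<t. \<not> halted t' v) \<Longrightarrow> length (hist t v) = t"
  by (induction t) (simp_all add: hist_Suc)

lemma length_hist_not_halted: "\<not> halted t v \<Longrightarrow> length (hist t v) = t"
  using length_hist not_halted_before by (meson less_imp_le)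

lemma hist_prefix: "t \<le> t' \<Longrightarrow> \<exists>ys. hist t' v = hist t v @ ys"
proof (induction t' rule: dec_induct)
  case (step m)
  then obtain ys where "hist m v = hist t v @ ys" by blast
  then show ?case using hist_Suc[of m v] by (cases "halted m v") auto
qed simp

lemma nth_hist:
  assumes "\<forall>t'<t. \<not> halted t' v" "k < t"
  shows "hist t v ! k = heard k v"
proof -
  have "hist (Suc k) v = hist k v @ [heard k v]" using assms hist_Suc[of k v] by simp
  moreover have "length (hist k v) = k" using assms by (intro length_hist) auto
  moreover obtain ys where "hist t v = hist (Suc k) v @ ys" using hist_prefix[of "Suc k" t v] assms(2) by auto
  ultimately show ?thesis by (simp add: nth_append)
qed

lemma not_halting_hist: "\<not> halted t v \<Longrightarrow> \<not> halting (ID v) (hist t v)"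
  using learn_halting by (auto simp: halted_def)

lemma act_code_round:
  assumes "\<not> halted t v" "t = phase_start len i + r" "r < len i"
  shows "act t v = (if r \<in> cw i (ID v) then Beep else Listen)"
  using learn_code_round[OF not_halting_hist[OF assms(1)] _ assms(3)]
    length_hist_not_halted[OF assms(1)] assms(2) by simp

lemma act_status_round:
  assumes "\<not> halted t v" "t = status_round i"
  shows "act t v = (if decided (ID v) (hist t v) i then Listen else Beep)"
  using learn_status_round[OF not_halting_hist[OF assms(1)]]
    length_hist_not_halted[OF assms(1)] assms(2) by simp

lemma first_halt:
  assumes "halted t v"
  obtains t0 where "t0 \<le> t" "\<forall>t'<t0. \<not> halted t' v" "act t v = act t0 v"
    "halting (ID v) (hist t0 v)"
proof -
  define t0 where "t0 = (LEAST t0. halted t0 v)"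
  have halted_t0: "halted t0 v" unfolding t0_def using assms by (rule LeastI)
  have "t0 \<le> t" unfolding t0_def using assms by (rule Least_le)
  moreover have "\<forall>t'<t0. \<not> halted t' v" unfolding t0_def using not_less_Least by blast
  moreover have "hist t v = hist t0 v" using halted_mono[OF halted_t0 \<open>t0 \<le> t\<close>] by simp
  moreover have "halting (ID v) (hist t0 v)"
    using halted_t0 learn_not_halting by (fastforce simp: halted_def)
  ultimately show ?thesis using that by simp
qed

lemma halted_imp_silent_status_round:
  assumes "halted t v"
  obtains i where "status_round i < t" "heard (status_round i) v = Silence"
proof -
  obtain t0 where t0: "t0 \<le> t" "\<forall>t'<t0. \<not> halted t' v" "halting (ID v) (hist t0 v)"
    using first_halt[OF assms] by blast
  moreover have "length (hist t0 v) = t0" using length_hist t0(2) by blast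
  ultimately obtain i where "status_round i < t0" "hist t0 v ! status_round i = Silence"
    unfolding halting_def by auto
  then show ?thesis using that[of i] nth_hist[OF t0(2), of "status_round i"] t0(1) by simp
qed

definition beeped_before :: "nat \<Rightarrow> nat \<Rightarrow> bool" where
  "beeped_before v j \<longleftrightarrow> (\<forall>i<j. act (status_round i) v = Beep)"

lemma not_halted_if_beeped_before:
  assumes "beeped_before v j" "v < n" "u = v \<or> u \<in> nbrs n E v" "t \<le> status_round j"
  shows "\<not> halted t u"
proof
  assume "halted t u"
  then obtain i where i: "status_round i < t" "heard (status_round i) u = Silence"
    by (rule halted_imp_silent_status_round)
  then have "i < j" using assms(4) status_round_less_iff[of i j] by linarith
  then have "act (status_round i) v = Beep" using assms(1) by (simp add: beeped_before_def)
  moreover have "v \<in> nbrs n E u" if "u \<in> nbrs n E v"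
    using that assms(2) graph by (auto simp: nbrs_def simple_graph_def)
  ultimately show False using i(2) assms(3) by (auto simp: heard_def split: if_splits)
qed

definition covered_ids :: "nat \<Rightarrow> nat \<Rightarrow> nat set" where
  "covered_ids j v = {y. y < N \<and> y \<noteq> ID v \<and>
     (\<forall>r \<in> cw j y - cw j (ID v). \<exists>u\<in>nbrs n E v. r \<in> cw j (ID u))}"

lemma candidates_eq_covered_ids:
  assumes v: "v < n" and beeped: "beeped_before v j"
  shows "candidates (ID v) (hist (status_round j) v @ ys) j = covered_ids j v"
proof -
  let ?T = "status_round j"
  have not_halted: "\<not> halted t u" if "t \<le> ?T" "u = v \<or> u \<in> nbrs n E v" for t u
    using not_halted_if_beeped_before[OF beeped v that(2,1)] .
  have heard_Noise: "(hist ?T v @ ys) ! (phase_start len j + r) = Noise \<longleftrightarrow>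
      (\<exists>u\<in>nbrs n E v. r \<in> cw j (ID u))"
    if r: "r \<in> cw j y - cw j (ID v)" and y: "y < N" for y r
  proof -
    let ?t = "phase_start len j + r"
    have r_less: "r < len j" using cw_less_len y r by blast
    have "\<forall>t'<?T. \<not> halted t' v" using not_halted by simp
    then have "(hist ?T v @ ys) ! ?t = heard ?t v"
      using nth_hist r_less length_hist by (simp add: nth_append)
    moreover have "act ?t v = Listen" using act_code_round[OF _ refl r_less] not_halted r_less r by simp
    moreover have "act ?t u = (if r \<in> cw j (ID u) then Beep else Listen)" if "u \<in> nbrs n E v" for u
      using act_code_round[OF _ refl r_less] not_halted that r_less by simp
    ultimately show ?thesis by (auto simp: heard_def)
  qed
  have "(\<forall>r \<in> cw j y - cw j (ID v). (hist ?T v @ ys) ! (phase_start len j + r) = Noise) \<longleftrightarrow>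
      (\<forall>r \<in> cw j y - cw j (ID v). \<exists>u\<in>nbrs n E v. r \<in> cw j (ID u))" if "y < N" for y
    using heard_Noise[OF _ that] by blast
  then show ?thesis unfolding candidates_def covered_ids_def by auto
qed

lemma card_ID_nbrs: "card (ID ` nbrs n E v) = card (nbrs n E v)"
proof (rule card_image)
  show "inj_on ID (nbrs n E v)" by (rule inj_on_subset[OF ID_inj]) (auto simp: nbrs_def)
qed

lemma ID_nbrs_subset_covered_ids:
  assumes "v < n"
  shows "ID ` nbrs n E v \<subseteq> covered_ids j v"
proof
  fix y assume "y \<in> ID ` nbrs n E v"
  then obtain u where u: "u \<in> nbrs n E v" "y = ID u" by blast
  then have "u < n" "u \<noteq> v" using graph by (auto simp: nbrs_def simple_graph_def)
  then have "ID u \<noteq> ID v" using inj_onD[OF ID_inj, of u v] assms by auto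
  then show "y \<in> covered_ids j v" using u \<open>u < n\<close> ID_less by (auto simp: covered_ids_def)
qed

lemma covered_ids_eq:
  assumes v: "v < n" and deg: "card (nbrs n E v) \<le> 2 ^ j"
  shows "covered_ids j v = ID ` nbrs n E v"
proof
  show "covered_ids j v \<subseteq> ID ` nbrs n E v"
  proof
    fix y assume y: "y \<in> covered_ids j v"
    show "y \<in> ID ` nbrs n E v"
    proof (rule ccontr)
      assume y_not_nbr: "y \<notin> ID ` nbrs n E v"
      define S where "S = insert (ID v) (ID ` nbrs n E v)"
      have "S \<subseteq> {0..<N}" using ID_less v by (auto simp: S_def nbrs_def)
      moreover have "y \<notin> S" using y y_not_nbr by (auto simp: S_def covered_ids_def)
      moreover have "card S \<le> 2 ^ j + 1"
        using card_insert_le_m1[of "card (ID ` nbrs n E v) + 1"] deg card_ID_nbrs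
        by (simp add: S_def card_insert_if nbrs_def)
      moreover have "cw j y \<subseteq> (\<Union>z\<in>S. cw j z)" using y by (auto simp: S_def covered_ids_def)
      moreover have "y < N" using y by (simp add: covered_ids_def)
      ultimately show False using cw_not_covered by blast
    qed
  qed
  show "ID ` nbrs n E v \<subseteq> covered_ids j v" using ID_nbrs_subset_covered_ids[OF v] .
qed

lemma covered_ids_eq_if_card_le:
  assumes v: "v < n" and card_le: "card (covered_ids j v) \<le> 2 ^ j"
  shows "covered_ids j v = ID ` nbrs n E v"
proof -
  have "finite (covered_ids j v)" by (rule finite_subset[of _ "{0..<N}"]) (auto simp: covered_ids_def)
  then have "card (nbrs n E v) \<le> card (covered_ids j v)"
    using card_mono[OF _ ID_nbrs_subset_covered_ids[OF v]] card_ID_nbrs by simp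
  then show ?thesis using covered_ids_eq[OF v] card_le by simp
qed

lemma decided_later:
  assumes "\<not> halted t v" "t = status_round i" "t \<le> t'" "decided (ID v) (hist t v) i"
  shows "decided (ID v) (hist t' v) i"
proof -
  obtain ys where "hist t' v = hist t v @ ys" using hist_prefix[OF assms(3)] by blast
  then show ?thesis using decided_append assms length_hist_not_halted[OF assms(1)] by simp
qed

lemma beeped_before_least_decided:
  assumes running: "\<forall>t'<t0. \<not> halted t' v" and before: "status_round j0 < t0"
    and least: "j0 = (LEAST j. card (candidates (ID v) (hist t0 v) j) \<le> 2 ^ j)"
  shows "beeped_before v j0"
  unfolding beeped_before_def
proof (intro allI impI)
  fix i assume "i < j0"
  let ?T = "status_round i"
  have "?T < t0" using \<open>i < j0\<close> before status_round_less_iff[of i j0] by linarith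
  then have not_halted: "\<not> halted ?T v" using running by blast
  have "\<not> card (candidates (ID v) (hist t0 v) j) \<le> 2 ^ j" if "j < j0" for j
    using not_less_Least that unfolding least by blast
  then have "\<not> decided (ID v) (hist t0 v) i" using \<open>i < j0\<close> unfolding decided_def by auto
  then have "\<not> decided (ID v) (hist ?T v) i"
    using decided_later[OF not_halted refl] \<open>?T < t0\<close> by fastforce
  then show "act ?T v = Beep" using act_status_round[OF not_halted refl] by simp
qed

lemma halt_output_correct:
  assumes v: "v < n" and halt: "act t v = Halt S"
  shows "S = ID ` nbrs n E v"
proof -
  have "halted t v" using halt by (auto simp: halted_def)
  then obtain t0 where t0: "t0 \<le> t" "\<forall>t'<t0. \<not> halted t' v" "act t v = act t0 v"
      "halting (ID v) (hist t0 v)"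
    by (rule first_halt)
  let ?h = "hist t0 v"
  define j0 where "j0 = (LEAST j. card (candidates (ID v) ?h j) \<le> 2 ^ j)"
  have len: "length ?h = t0" using length_hist t0(2) by blast
  obtain i j where i: "status_round i < t0" and j: "j \<le> i" "card (candidates (ID v) ?h j) \<le> 2 ^ j"
    using t0(4) len unfolding halting_def decided_def by auto
  have card_le: "card (candidates (ID v) ?h j0) \<le> 2 ^ j0" using j(2) unfolding j0_def by (rule LeastI)
  have "j0 \<le> j" using j(2) unfolding j0_def by (rule Least_le)
  then have before: "status_round j0 < t0" using j(1) i status_round_mono[of j0 i] by linarith
  have S: "S = candidates (ID v) ?h j0" using halt t0(3,4) by (simp add: learn_halting learned_def j0_def)
  obtain ys where "?h = hist (status_round j0) v @ ys" using hist_prefix before by (meson less_imp_le)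
  then have "candidates (ID v) ?h j0 = covered_ids j0 v"
    using candidates_eq_covered_ids[OF v beeped_before_least_decided[OF t0(2) before j0_def]] by simp
  then show ?thesis using S card_le covered_ids_eq_if_card_le[OF v] by simp
qed

lemma decided_if_degree_le:
  assumes deg: "\<forall>v<n. card (nbrs n E v) \<le> 2 ^ k" and w: "w < n"
    and not_halted: "\<not> halted (status_round k) w"
  shows "decided (ID w) (hist (status_round k) w) k"
proof (cases "beeped_before w k")
  case True
  have "candidates (ID w) (hist (status_round k) w) k = ID ` nbrs n E w"
    using candidates_eq_covered_ids[OF w True, of "[]"] covered_ids_eq[OF w] deg w by simp
  then show ?thesis using card_ID_nbrs deg w unfolding decided_def by (intro exI[of _ k]) simp
next
  case False
  then obtain i where i: "i < k" "act (status_round i) w \<noteq> Beep" unfolding beeped_before_def by auto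
  have le: "status_round i \<le> status_round k" using status_round_mono i(1) by simp
  then have "\<not> halted (status_round i) w" using not_halted_before[OF not_halted] by blast
  then have "decided (ID w) (hist (status_round k) w) i"
    using act_status_round i(2) decided_later le by fastforce
  then show ?thesis using i(1) unfolding decided_def by (meson le_trans less_imp_le)
qed

lemma halted_if_degree_le:
  assumes deg: "\<forall>v<n. card (nbrs n E v) \<le> 2 ^ k" and v: "v < n"
  shows "halted (phase_start len (Suc k)) v"
proof (rule ccontr)
  let ?T = "status_round k"
  assume "\<not> halted (phase_start len (Suc k)) v"
  then have not_halted_Suc: "\<not> halted (Suc ?T) v" by simp
  then have not_halted: "\<not> halted ?T v" using not_halted_before by simp
  have "act ?T w \<noteq> Beep" if "w < n" for w
  proof (cases "halted ?T w")
    case False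
    then show ?thesis using act_status_round[OF False refl] decided_if_degree_le[OF deg that False] by simp
  qed (auto simp: halted_def)
  then have silent: "heard ?T v = Silence" using v by (auto simp: heard_def nbrs_def)
  have hist_Suc_T: "hist (Suc ?T) v = hist ?T v @ [Silence]"
    using hist_Suc[of ?T v] not_halted silent by simp
  have len: "length (hist ?T v) = ?T" using length_hist_not_halted[OF not_halted] .
  have "decided (ID v) (hist (Suc ?T) v) k"
    unfolding hist_Suc_T using decided_append len decided_if_degree_le[OF deg v not_halted] by simp
  then have "halting (ID v) (hist (Suc ?T) v)"
    unfolding halting_def using hist_Suc_T len by (intro exI[of _ k]) (simp add: nth_append)
  then show False using not_halted_Suc learn_halting by (simp add: halted_def)
qed

lemma solves_within_if_degree_le:
  assumes "\<forall>v<n. card (nbrs n E v) \<le> 2 ^ k"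
  shows "solves_within A n E ID (phase_start len (Suc k))"
  unfolding solves_within_def A_eq
proof (intro allI impI)
  fix v assume v: "v < n"
  obtain S where "act (phase_start len (Suc k)) v = Halt S"
    using halted_if_degree_le[OF assms v] by (auto simp: halted_def)
  then show "\<exists>t\<le>phase_start len (Suc k). learn (ID v) (hist t v) = Halt (ID ` nbrs n E v)"
    using halt_output_correct[OF v] by blast
qed

end

section \<open>Parameters for IDs up to n powr c\<close>

definition id_bound :: "real \<Rightarrow> nat \<Rightarrow> nat" where
  "id_bound c n = nat \<lfloor>real n powr c\<rfloor> + 1"

definition id_bits :: "real \<Rightarrow> nat \<Rightarrow> nat" where
  "id_bits c n = nat \<lceil>c * log 2 (real n)\<rceil> + 2"

text \<open>With K = 2^j + 1, the length (K + 1) * id_bits c n and alphabet size 2 * K are those of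
  exists_disjunct_code.\<close>
definition code_length :: "real \<Rightarrow> nat \<Rightarrow> nat \<Rightarrow> nat" where
  "code_length c n j = (2 ^ j + 2) * id_bits c n"

definition code_alphabet :: "nat \<Rightarrow> nat" where
  "code_alphabet j = 2 * (2 ^ j + 1)"

definition phase_code :: "real \<Rightarrow> nat \<Rightarrow> nat \<Rightarrow> nat \<times> nat \<Rightarrow> nat" where
  "phase_code c n j =
     (SOME H. disjunct_code (id_bound c n) (2 ^ j + 1) (code_length c n j) (code_alphabet j) H)"

definition phase_len :: "real \<Rightarrow> nat \<Rightarrow> nat \<Rightarrow> nat" where
  "phase_len c n j = code_length c n j * code_alphabet j"

definition phase_cw :: "real \<Rightarrow> nat \<Rightarrow> nat \<Rightarrow> nat \<Rightarrow> nat set" where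
  "phase_cw c n j = codeword (code_length c n j) (code_alphabet j) (phase_code c n j)"

definition beep_learn :: "real \<Rightarrow> alg" where
  "beep_learn c n = phased_schedule.learn (id_bound c n) (phase_len c n) (phase_cw c n)"

lemma id_bound_less_pow_id_bits:
  assumes "c \<ge> 0" "n \<ge> 1"
  shows "id_bound c n < 2 ^ id_bits c n"
proof -
  define m where "m = nat \<lceil>c * log 2 (real n)\<rceil>"
  have "real n powr c = (2 powr log 2 (real n)) powr c" using assms(2) by simp
  also have "\<dots> = 2 powr (c * log 2 (real n))" by (simp add: powr_powr mult.commute)
  also have "\<dots> \<le> 2 powr m" unfolding m_def by (intro powr_mono) linarith+
  finally have pow_le: "real n powr c \<le> 2 ^ m" by (simp add: powr_realpow)
  have pow_ge: "real n powr c \<ge> 1" using assms by (simp add: ge_one_powr_ge_zero)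
  then have "real (id_bound c n) \<le> real n powr c + 1" by (simp add: id_bound_def)
  also have "\<dots> < 4 * 2 ^ m" using pow_le pow_ge by simp
  also have "\<dots> = real (2 ^ id_bits c n)" by (simp add: id_bits_def m_def power_add)
  finally show ?thesis by linarith
qed

lemma disjunct_phase_code:
  assumes "c \<ge> 0" "n \<ge> 1"
  shows "disjunct_code (id_bound c n) (2 ^ j + 1) (code_length c n j) (code_alphabet j) (phase_code c n j)"
proof -
  have "\<exists>H. disjunct_code (id_bound c n) (2 ^ j + 1) (code_length c n j) (code_alphabet j) H"
    using exists_disjunct_code[OF _ id_bound_less_pow_id_bits[OF assms], of "2 ^ j + 1"]
    by (simp add: code_length_def code_alphabet_def add.commute)
  then show ?thesis unfolding phase_code_def by (rule someI_ex)
qed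

lemma phased_schedule_phase_cw:
  assumes "c \<ge> 0" "n \<ge> 1"
  shows "phased_schedule (id_bound c n) (phase_len c n) (phase_cw c n)"
proof
  show "r < phase_len c n j" if "x < id_bound c n" "r \<in> phase_cw c n j x" for x r j
    using codeword_less[OF disjunct_phase_code[OF assms] that(1)] that(2)
    by (simp add: phase_len_def phase_cw_def)
  show "\<not> phase_cw c n j x \<subseteq> (\<Union>y\<in>S. phase_cw c n j y)"
    if "x < id_bound c n" "S \<subseteq> {0..<id_bound c n}" "x \<notin> S" "card S \<le> 2 ^ j + 1" for x S j
    using codeword_not_covered[OF disjunct_phase_code[OF assms] that] by (simp add: phase_cw_def)
qed

lemma phased_run_beep_learn:
  assumes "c \<ge> 0" "n \<ge> 1" "simple_graph n E" "inj_on ID {0..<n}"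
    and "\<forall>v<n. real (ID v) \<le> real n powr c"
  shows "phased_run (id_bound c n) (phase_len c n) (phase_cw c n) (beep_learn c) n E ID"
proof (intro phased_run.intro phased_run_axioms.intro phased_schedule_phase_cw[OF assms(1,2)])
  show "ID v < id_bound c n" if "v < n" for v
    using le_nat_floor assms(5) that by (simp add: id_bound_def le_imp_less_Suc)
qed (simp_all add: beep_learn_def assms(3,4))

lemma phase_len_Suc_le: "phase_len c n j + 1 \<le> 3 * (6 * id_bits c n) * 4 ^ j"
proof -
  define p where "p = (2::nat) ^ j"
  define b where "b = id_bits c n"
  have p: "1 \<le> p" and b: "1 \<le> b" by (simp_all add: p_def b_def id_bits_def)
  have "p \<le> p * p" using p by simp
  then have "2 * (p * p) + 6 * p + 4 \<le> 12 * (p * p)" using p by linarith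
  moreover have "1 \<le> b * (p * p)" using mult_le_mono[OF b mult_le_mono[OF p p]] by simp
  moreover have "phase_len c n j + 1 = b * (2 * (p * p) + 6 * p + 4) + 1"
    by (simp add: phase_len_def code_length_def code_alphabet_def p_def b_def algebra_simps)
  ultimately have "phase_len c n j + 1 \<le> b * (12 * (p * p)) + b * (p * p)"
    by (metis add_mono mult_le_mono2)
  also have "\<dots> \<le> 3 * (6 * b) * (p * p)" by simp
  also have "p * p = 4 ^ j" by (simp add: p_def flip: power_mult_distrib)
  finally show ?thesis by (simp add: b_def)
qed

lemma id_bits_le:
  assumes "c \<ge> 0" "n \<ge> 2"
  shows "real (id_bits c n) \<le> (c + 3) * log 2 (real n) ^ 2"
proof -
  have log_ge: "log 2 (real n) \<ge> 1" using assms(2) by simp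
  then have "real (id_bits c n) \<le> c * log 2 (real n) + 3"
    using assms(1) by (simp add: id_bits_def) linarith
  also have "\<dots> \<le> (c + 3) * log 2 (real n)" using log_ge by (simp add: algebra_simps)
  also have "\<dots> \<le> (c + 3) * log 2 (real n) ^ 2"
    using log_ge assms(1) by (intro mult_left_mono) (auto simp: power2_eq_square)
  finally show ?thesis .
qed

lemma phase_start_phase_len_le:
  assumes "c \<ge> 0" "n \<ge> 2" "2 ^ i \<le> m"
  shows "real (phase_start (phase_len c n) (i + 2)) \<le> 96 * (c + 3) * real m ^ 2 * log 2 (real n) ^ 2"
proof -
  have "phase_start (phase_len c n) (i + 2) \<le> 6 * id_bits c n * 4 ^ (i + 2)"
    by (rule phase_start_le[OF phase_len_Suc_le])
  also have "\<dots> = 96 * id_bits c n * (2 ^ i) ^ 2" by (simp add: power2_eq_square flip: power_mult_distrib)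
  also have "\<dots> \<le> 96 * id_bits c n * m ^ 2" using assms(3) by (simp add: power_mono)
  finally have "real (phase_start (phase_len c n) (i + 2)) \<le> real (96 * id_bits c n * m ^ 2)"
    by (rule of_nat_mono)
  also have "\<dots> = 96 * real (id_bits c n) * real m ^ 2" by simp
  also have "\<dots> \<le> 96 * ((c + 3) * log 2 (real n) ^ 2) * real m ^ 2"
    using id_bits_le[OF assms(1,2)] by (intro mult_right_mono mult_left_mono) auto
  finally show ?thesis by (simp add: algebra_simps)
qed

theorem theorem2:
  fixes c :: real
  assumes "c \<ge> 1"
  shows "\<exists>(A::alg) (C::real). C > 0 \<and>
    (\<forall>n E ID. n \<ge> 2 \<and> simple_graph n E \<and> inj_on ID {0..<n} \<and>
       (\<forall>v<n. 1 \<le> ID v \<and> real (ID v) \<le> real n powr c) \<longrightarrow>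
       (\<exists>T. solves_within A n E ID T \<and>
          real T \<le> C * real (max 1 (max_degree n E)) ^ 2 * (log 2 (real n)) ^ 2))"
proof (intro exI[of _ "beep_learn c"] exI[of _ "96 * (c + 3)"] conjI allI impI)
  show "96 * (c + 3) > 0" using assms by simp
  fix n E ID
  assume h: "2 \<le> n \<and> simple_graph n E \<and> inj_on ID {0..<n} \<and>
    (\<forall>v<n. 1 \<le> ID v \<and> real (ID v) \<le> real n powr c)"
  then interpret phased_run "id_bound c n" "phase_len c n" "phase_cw c n" "beep_learn c" n E ID
    using assms by (intro phased_run_beep_learn) auto
  define m where "m = max 1 (max_degree n E)"
  obtain i where i: "2 ^ i \<le> m" "m < 2 ^ (i + 1)" using ex_power_ivl1[of 2 m] by (auto simp: m_def)
  have "card (nbrs n E v) \<le> max_degree n E" if "v < n" for v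
    unfolding max_degree_def using that by (intro Max_ge) auto
  then have "card (nbrs n E v) \<le> 2 ^ (i + 1)" if "v < n" for v
    using that i(2) unfolding m_def by (meson le_trans less_imp_le max.cobounded2)
  then have "solves_within (beep_learn c) n E ID (phase_start (phase_len c n) (i + 2))"
    using solves_within_if_degree_le[of "i + 1"] by simp
  moreover have "real (phase_start (phase_len c n) (i + 2)) \<le> 96 * (c + 3) * real m ^ 2 * log 2 (real n) ^ 2"
    using phase_start_phase_len_le i(1) assms h by simp
  ultimately show "\<exists>T. solves_within (beep_learn c) n E ID T \<and>
      real T \<le> 96 * (c + 3) * real (max 1 (max_degree n E)) ^ 2 * log 2 (real n) ^ 2"
    unfolding m_def by blast
qed

end
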